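(* Let $\alpha_1,\dots,\alpha_K\in\mathbb R^d\setminus\{0\}$ and $\eta_1,\dots,\eta_J\in\mathbb R^d$, and let $\mathcal G=\{\sum_{j=1}^J\nu_j\eta_j:\nu_j\in[0,1],\sum_j\nu_j=1\}$. Writing $\pi(\eta)$ for the canonical projection of $\eta$ with respect to $\{\alpha_1,\dots,\alpha_K\}$, suppose $\|\pi(\eta_1)\|>\max_{j=2,\dots,J}\|\pi(\eta_j)\|$. Then $\eta_1$ is the unique maximizer of $\eta\mapsto\|\pi(\eta)\|$ over $\mathcal G$.
   Context: Canonical projection: for $\eta\ne0$, choose a (possibly empty) subset $\{\alpha_{k_1},\dots,\alpha_{k_m}\}$ of $\{\alpha_1,\dots,\alpha_K\}$, $\mathcal H_\eta$ its span, such that $P_{\mathcal H_\eta}\eta=\sum_p\gamma_{k_p}\alpha_{k_p}$ with all $\gamma_{k_p}\ge0$ and $\alpha_k^{T}P_{\mathcal H_\eta^\perp}\eta<0$ for all $k\notin\{k_1,\dots,k_m\}$; such a subset exists and $\pi(\eta):=P_{\mathcal H_\eta^\perp}\eta$ is uniquely determined and continuous in $\eta$ (set $\pi(0)=0$). $P$ denotes orthogonal projection. *)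

theory Defs
  imports "HOL-Analysis.Analysis"
begin

definition orth_proj :: "'a::euclidean_space set \<Rightarrow> 'a \<Rightarrow> 'a" where
  "orth_proj H x = (THE p. p \<in> H \<and> (\<forall>h\<in>H. (x - p) \<bullet> h = 0))"

definition orth_compl :: "'a::euclidean_space set \<Rightarrow> 'a set" where
  "orth_compl H = {y. \<forall>h\<in>H. y \<bullet> h = 0}"

definition canon_subset :: "(nat \<Rightarrow> 'a::euclidean_space) \<Rightarrow> nat \<Rightarrow> 'a \<Rightarrow> nat set \<Rightarrow> bool" where
  "canon_subset alpha K eta S \<longleftrightarrow>
     S \<subseteq> {1..K} \<and>
     (\<exists>\<gamma>::nat \<Rightarrow> real. (\<forall>k\<in>S. \<gamma> k \<ge> 0) \<and>
        orth_proj (span (alpha ` S)) eta = (\<Sum>k\<in>S. \<gamma> k *\<^sub>R alpha k)) \<and>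
     (\<forall>k\<in>{1..K} - S. alpha k \<bullet> orth_proj (orth_compl (span (alpha ` S))) eta < 0)"

definition canon_proj :: "(nat \<Rightarrow> 'a::euclidean_space) \<Rightarrow> nat \<Rightarrow> 'a \<Rightarrow> 'a" where
  "canon_proj alpha K eta =
     (if eta = 0 then 0
      else THE v. \<exists>S. canon_subset alpha K eta S \<and>
                    v = orth_proj (orth_compl (span (alpha ` S))) eta)"

end

theory Submission
  imports Defs
begin

text \<open>Let \<open>C\<close> be the convex cone generated by \<open>\<alpha>\<^sub>1, \<dots>, \<alpha>\<^sub>K\<close>. For a canonical subset \<open>S\<close> of \<open>\<eta>\<close>,
  the point \<open>c = P\<^bsub>span \<alpha>(S)\<^esub> \<eta>\<close> lies in \<open>C\<close>, is orthogonal to \<open>\<eta> - c\<close>, and \<open>\<eta> - c\<close> has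
  non-positive inner product with every generator; by Moreau's characterisation \<open>c\<close> is the metric
  projection of \<open>\<eta>\<close> onto \<open>C\<close>. Hence \<open>\<pi>(\<eta>) = \<eta> - P\<^sub>C \<eta>\<close> and \<open>\<parallel>\<pi>(\<eta>)\<parallel>\<close> is the distance from \<open>\<eta>\<close>
  to the convex set \<open>C\<close>, a convex function of \<open>\<eta>\<close>. By Jensen's inequality a convex function on the
  convex hull of \<open>\<eta>\<^sub>1, \<dots>, \<eta>\<^sub>J\<close> is bounded by its largest value at the \<open>\<eta>\<^sub>j\<close>, and if that value is
  attained only at \<open>\<eta>\<^sub>1\<close>, any convex combination reaching it must put all its weight on \<open>\<eta>\<^sub>1\<close>.\<close>

lemma orth_proj_eqI:
  fixes M :: "'a::euclidean_space set"
  assumes "subspace M" "p \<in> M" "\<And>h. h \<in> M \<Longrightarrow> (x - p) \<bullet> h = 0"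
  shows "orth_proj M x = p"
  unfolding orth_proj_def
proof (rule the_equality)
  show "p \<in> M \<and> (\<forall>h\<in>M. (x - p) \<bullet> h = 0)" using assms by auto
next
  fix q assume q: "q \<in> M \<and> (\<forall>h\<in>M. (x - q) \<bullet> h = 0)"
  have "q - p \<in> M" using assms q by (simp add: subspace_diff)
  then have "(x - q) \<bullet> (q - p) = 0" "(x - p) \<bullet> (q - p) = 0" using q assms by auto
  then have "(q - p) \<bullet> (q - p) = 0" by (simp add: algebra_simps inner_diff_left)
  then show "q = p" by simp
qed

lemma orth_proj_span:
  fixes A :: "'a::euclidean_space set"
  shows "orth_proj (span A) x \<in> span A"
    and "h \<in> span A \<Longrightarrow> (x - orth_proj (span A) x) \<bullet> h = 0"
proof -
  obtain y z where y: "y \<in> span A" and z: "\<And>w. w \<in> span A \<Longrightarrow> orthogonal z w"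
    and xyz: "x = y + z"
    by (rule orthogonal_subspace_decomp_exists[of A x]) blast
  have "orth_proj (span A) x = y"
    by (rule orth_proj_eqI) (use y z xyz in \<open>auto simp: orthogonal_def\<close>)
  then show "orth_proj (span A) x \<in> span A" and "h \<in> span A \<Longrightarrow> (x - orth_proj (span A) x) \<bullet> h = 0"
    using y z xyz by (auto simp: orthogonal_def)
qed

lemma subspace_orth_compl: "subspace (orth_compl H)"
  unfolding subspace_def orth_compl_def by (auto simp: inner_add_left)

lemma orth_proj_orth_compl_span:
  fixes A :: "'a::euclidean_space set"
  shows "orth_proj (orth_compl (span A)) x = x - orth_proj (span A) x"
  by (rule orth_proj_eqI[OF subspace_orth_compl])
    (use orth_proj_span[where A=A and x=x] in \<open>auto simp: orth_compl_def inner_commute\<close>)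

lemma convex_cone_sum:
  assumes "convex_cone T" "\<And>i. i \<in> I \<Longrightarrow> x i \<in> T"
  shows "(\<Sum>i\<in>I. x i) \<in> T"
  using assms(2)
proof (induction I rule: infinite_finite_induct)
  case (insert i I)
  then show ?case using convex_cone_add[OF assms(1)] by simp
qed (use convex_cone_contains_0[OF assms(1)] in simp_all)

lemma convex_cone_hull_finite_image:
  fixes f :: "'i \<Rightarrow> 'a::real_vector"
  assumes "finite I"
  shows "convex_cone hull (f ` I) = {\<Sum>i\<in>I. g i *\<^sub>R f i | g. \<forall>i\<in>I. 0 \<le> g i}"
    (is "_ = ?C")
proof (rule hull_unique)
  show "f ` I \<subseteq> ?C"
  proof (rule image_subsetI)
    fix i assume "i \<in> I"
    then have "f i = (\<Sum>j\<in>I. (if j = i then 1 else 0) *\<^sub>R f j)"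
      using assms by (subst sum.cong[OF refl, of _ _ "\<lambda>j. if j = i then f j else 0"]) auto
    then show "f i \<in> ?C" by fastforce
  qed
  show "convex_cone ?C"
    unfolding convex_cone_iff
  proof (intro conjI ballI allI impI)
    show "0 \<in> ?C" by (rule CollectI, rule exI[of _ "\<lambda>_. 0"]) simp
    fix x y assume "x \<in> ?C" "y \<in> ?C"
    then obtain g h where "x = (\<Sum>i\<in>I. g i *\<^sub>R f i)" "\<forall>i\<in>I. 0 \<le> g i"
      and "y = (\<Sum>i\<in>I. h i *\<^sub>R f i)" "\<forall>i\<in>I. 0 \<le> h i" by blast
    then show "x + y \<in> ?C"
      by (intro CollectI exI[of _ "\<lambda>i. g i + h i"]) (simp add: scaleR_add_left sum.distrib)
  next
    fix x and c :: real assume "x \<in> ?C" "0 \<le> c"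
    then obtain g where "x = (\<Sum>i\<in>I. g i *\<^sub>R f i)" "\<forall>i\<in>I. 0 \<le> g i" by blast
    with \<open>0 \<le> c\<close> show "c *\<^sub>R x \<in> ?C"
      by (intro CollectI exI[of _ "\<lambda>i. c * g i"]) (simp add: scaleR_sum_right)
  qed
  fix T assume T: "f ` I \<subseteq> T" "convex_cone T"
  show "?C \<subseteq> T"
    by (auto intro!: convex_cone_sum[OF T(2)] convex_cone_scaleR[OF T(2)] simp: T(1)[THEN subsetD])
qed

lemma closest_point_convex_cone:
  fixes C :: "'a::euclidean_space set"
  assumes "convex_cone C" "closed C"
  shows "(a - closest_point C a) \<bullet> closest_point C a = 0"
    and "y \<in> C \<Longrightarrow> (a - closest_point C a) \<bullet> y \<le> 0"
proof -
  let ?c = "closest_point C a"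
  have convex: "convex C" using assms(1) by (simp add: convex_cone_def)
  have c: "?c \<in> C" using assms closest_point_in_set convex_cone_nonempty by blast
  have dot: "(a - ?c) \<bullet> (y - ?c) \<le> 0" if "y \<in> C" for y
    by (rule closest_point_dot[OF convex assms(2) that])
  have "(a - ?c) \<bullet> (0 - ?c) \<le> 0" by (rule dot[OF convex_cone_contains_0[OF assms(1)]])
  moreover have "(a - ?c) \<bullet> (2 *\<^sub>R ?c - ?c) \<le> 0"
    by (rule dot, rule convex_cone_scaleR[OF assms(1) _ c]) simp
  ultimately show orth: "(a - ?c) \<bullet> ?c = 0" by (simp add: inner_diff_right algebra_simps)
  show "(a - ?c) \<bullet> y \<le> 0" if "y \<in> C"
    using dot[OF that] orth by (simp add: inner_diff_right)
qed

lemma closest_point_convex_cone_eqI: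
  fixes C :: "'a::euclidean_space set"
  assumes "convex_cone C" "closed C" "c \<in> C"
    and "(a - c) \<bullet> c = 0" "\<And>y. y \<in> C \<Longrightarrow> (a - c) \<bullet> y \<le> 0"
  shows "closest_point C a = c"
proof (rule closest_point_unique[symmetric])
  show "convex C" using assms(1) by (simp add: convex_cone_def)
  show "\<forall>z\<in>C. dist a c \<le> dist a z"
  proof
    fix z assume "z \<in> C"
    have "(a - z) \<bullet> (a - z) = (a - c) \<bullet> (a - c) + 2 * ((a - c) \<bullet> (c - z)) + (c - z) \<bullet> (c - z)"
      by (simp add: inner_diff_left inner_diff_right inner_commute algebra_simps)
    also have "\<dots> \<ge> (a - c) \<bullet> (a - c)"
    proof -
      have "(a - c) \<bullet> (c - z) \<ge> 0"
        using assms(4) assms(5)[OF \<open>z \<in> C\<close>] by (simp add: inner_diff_right)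
      then show ?thesis by simp
    qed
    finally show "dist a c \<le> dist a z" by (simp add: dist_norm norm_le)
  qed
qed (use assms in auto)

abbreviation generated_cone :: "(nat \<Rightarrow> 'a::euclidean_space) \<Rightarrow> nat \<Rightarrow> 'a set" where
  "generated_cone alpha K \<equiv> convex_cone hull (alpha ` {1..K})"

lemma closed_generated_cone: "closed (generated_cone alpha K)"
  by (simp add: closed_convex_cone_hull)

lemma canon_subset_orth_proj_eq:
  fixes alpha :: "nat \<Rightarrow> 'a::euclidean_space"
  assumes "canon_subset alpha K eta S"
  shows "orth_proj (orth_compl (span (alpha ` S))) eta = eta - closest_point (generated_cone alpha K) eta"
proof -
  let ?C = "generated_cone alpha K"
  define u where "u = orth_proj (span (alpha ` S)) eta"
  have SK: "S \<subseteq> {1..K}" using assms unfolding canon_subset_def by auto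
  obtain \<gamma> where \<gamma>: "\<forall>k\<in>S. \<gamma> k \<ge> 0" "u = (\<Sum>k\<in>S. \<gamma> k *\<^sub>R alpha k)"
    using assms unfolding canon_subset_def u_def by auto
  have outside: "alpha k \<bullet> (eta - u) < 0" if "k \<in> {1..K} - S" for k
    using assms that unfolding canon_subset_def u_def orth_proj_orth_compl_span by auto
  have inside: "(eta - u) \<bullet> h = 0" if "h \<in> span (alpha ` S)" for h
    using orth_proj_span(2)[OF that] unfolding u_def .
  have "u \<in> ?C"
    unfolding \<gamma>(2) using SK \<gamma>(1)
    by (intro convex_cone_sum[OF convex_cone_convex_cone_hull] convex_cone_hull_mul)
      (auto intro: hull_inc)
  moreover have "(eta - u) \<bullet> u = 0"
    using inside orth_proj_span(1) unfolding u_def by blast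
  moreover have "?C \<subseteq> {y. (eta - u) \<bullet> y \<le> 0}"
  proof (rule hull_minimal[where S = convex_cone, OF _ convex_cone_halfspace_le], clarify)
    fix k assume "k \<in> {1..K}"
    then show "(eta - u) \<bullet> alpha k \<le> 0"
      using inside[OF span_base] outside[of k] by (cases "k \<in> S") (auto simp: inner_commute)
  qed
  ultimately have "closest_point ?C eta = u"
    by (intro closest_point_convex_cone_eqI convex_cone_convex_cone_hull closed_generated_cone) auto
  then show ?thesis unfolding orth_proj_orth_compl_span u_def by simp
qed

text \<open>The canonical subset is read off the metric projection \<open>c\<close> onto the cone: it consists of the
  generators orthogonal to \<open>\<eta> - c\<close>, and complementary slackness puts \<open>c\<close> in their span.\<close>

lemma canon_subset_exists:
  fixes alpha :: "nat \<Rightarrow> 'a::euclidean_space"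
  shows "\<exists>S. canon_subset alpha K eta S"
proof -
  let ?C = "generated_cone alpha K"
  define c where "c = closest_point ?C eta"
  define p where "p = eta - c"
  have cone: "convex_cone ?C" by (rule convex_cone_convex_cone_hull)
  have "c \<in> ?C"
    unfolding c_def using closest_point_in_set[OF closed_generated_cone] convex_cone_nonempty[OF cone]
    by blast
  then obtain g where g: "c = (\<Sum>k\<in>{1..K}. g k *\<^sub>R alpha k)" "\<forall>k\<in>{1..K}. 0 \<le> g k"
    by (auto simp: convex_cone_hull_finite_image)
  have pc: "p \<bullet> c = 0"
    using closest_point_convex_cone(1)[OF cone closed_generated_cone] unfolding p_def c_def .
  have pa: "p \<bullet> alpha k \<le> 0" if "k \<in> {1..K}" for k
  proof -
    have "alpha k \<in> ?C" using that by (intro hull_inc) auto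
    then show ?thesis
      using closest_point_convex_cone(2)[OF cone closed_generated_cone] unfolding p_def c_def by blast
  qed
  define S where "S = {k\<in>{1..K}. alpha k \<bullet> p = 0}"
  have "(\<Sum>k\<in>{1..K}. g k * - (p \<bullet> alpha k)) = 0"
    using pc by (simp add: g(1) inner_sum_right sum_negf)
  then have "\<forall>k\<in>{1..K}. g k * - (p \<bullet> alpha k) = 0"
    using g(2) pa by (subst (asm) sum_nonneg_eq_0_iff) (auto simp: mult_nonneg_nonpos)
  then have "g k = 0" if "k \<in> {1..K} - S" for k
    using that unfolding S_def by (auto simp: inner_commute)
  then have cS: "c = (\<Sum>k\<in>S. g k *\<^sub>R alpha k)"
    unfolding g(1) by (intro sum.mono_neutral_cong_right) (auto simp: S_def)
  have "p \<bullet> h = 0" if "h \<in> span (alpha ` S)" for h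
  proof -
    have "orthogonal p y" if "y \<in> alpha ` S" for y
      using that by (auto simp: S_def orthogonal_def inner_commute)
    then show ?thesis
      using orthogonal_to_span[OF \<open>h \<in> span (alpha ` S)\<close>] by (simp add: orthogonal_def)
  qed
  then have P: "orth_proj (span (alpha ` S)) eta = c"
    by (intro orth_proj_eqI subspace_span) (auto simp: cS p_def intro: span_sum span_mul span_base)
  have "canon_subset alpha K eta S"
    unfolding canon_subset_def orth_proj_orth_compl_span P
  proof (intro conjI ballI)
    show "\<exists>\<gamma>. (\<forall>k\<in>S. 0 \<le> \<gamma> k) \<and> c = (\<Sum>k\<in>S. \<gamma> k *\<^sub>R alpha k)"
      using g(2) cS by (intro exI[of _ g]) (auto simp: S_def)
    fix k assume "k \<in> {1..K} - S"
    then show "alpha k \<bullet> (eta - c) < 0"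
      using pa[of k] by (auto simp: S_def p_def inner_commute)
  qed (auto simp: S_def)
  then show ?thesis ..
qed

lemma canon_proj_eq_diff_closest_point:
  fixes alpha :: "nat \<Rightarrow> 'a::euclidean_space"
  shows "canon_proj alpha K eta = eta - closest_point (generated_cone alpha K) eta"
proof (cases "eta = 0")
  case True
  then show ?thesis
    unfolding canon_proj_def by (simp add: closest_point_self convex_cone_hull_contains_0)
next
  case False
  obtain S where "canon_subset alpha K eta S" using canon_subset_exists by blast
  then have "(THE v. \<exists>S. canon_subset alpha K eta S \<and> v = orth_proj (orth_compl (span (alpha ` S))) eta)
      = eta - closest_point (generated_cone alpha K) eta"
    by (intro the_equality) (auto simp: canon_subset_orth_proj_eq)
  with False show ?thesis unfolding canon_proj_def by simp
qed

lemma convex_on_dist_closest_point: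
  fixes S :: "'a::euclidean_space set"
  assumes "convex S" "closed S" "S \<noteq> {}"
  shows "convex_on UNIV (\<lambda>x. dist x (closest_point S x))"
proof (rule convex_onI)
  fix t :: real and x y assume t: "0 < t" "t < 1"
  let ?cp = "closest_point S"
  have "(1 - t) *\<^sub>R ?cp x + t *\<^sub>R ?cp y \<in> S"
    using t by (intro convexD[OF assms(1)] closest_point_in_set[OF assms(2,3)]) auto
  then have "dist ((1 - t) *\<^sub>R x + t *\<^sub>R y) (?cp ((1 - t) *\<^sub>R x + t *\<^sub>R y))
      \<le> dist ((1 - t) *\<^sub>R x + t *\<^sub>R y) ((1 - t) *\<^sub>R ?cp x + t *\<^sub>R ?cp y)"
    by (rule closest_point_le[OF assms(2)])
  also have "\<dots> = norm ((1 - t) *\<^sub>R (x - ?cp x) + t *\<^sub>R (y - ?cp y))"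
    by (simp add: dist_norm algebra_simps)
  also have "\<dots> \<le> (1 - t) * dist x (?cp x) + t * dist y (?cp y)"
    using t by (intro order_trans[OF norm_triangle_ineq]) (simp add: dist_norm)
  finally show "dist ((1 - t) *\<^sub>R x + t *\<^sub>R y) (?cp ((1 - t) *\<^sub>R x + t *\<^sub>R y))
      \<le> (1 - t) * dist x (?cp x) + t * dist y (?cp y)" .
qed simp

lemma convex_on_norm_canon_proj:
  fixes alpha :: "nat \<Rightarrow> 'a::euclidean_space"
  shows "convex_on UNIV (\<lambda>x. norm (canon_proj alpha K x))"
  using convex_on_dist_closest_point[OF convex_convex_cone_hull closed_generated_cone
      convex_cone_hull_nonempty, of alpha K]
  by (simp add: canon_proj_eq_diff_closest_point dist_norm)

lemma convex_on_sum_le_unique_max: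
  fixes f :: "'a::real_vector \<Rightarrow> real"
  assumes "convex_on C f" "finite I" "i \<in> I" "\<And>j. j \<in> I \<Longrightarrow> y j \<in> C"
    and "\<And>j. j \<in> I - {i} \<Longrightarrow> f (y j) < f (y i)"
    and "\<And>j. j \<in> I \<Longrightarrow> 0 \<le> \<nu> j" "sum \<nu> I = 1"
  shows "f (\<Sum>j\<in>I. \<nu> j *\<^sub>R y j) \<le> f (y i)"
    and "f (\<Sum>j\<in>I. \<nu> j *\<^sub>R y j) = f (y i) \<Longrightarrow> (\<Sum>j\<in>I. \<nu> j *\<^sub>R y j) = y i"
proof -
  let ?x = "\<Sum>j\<in>I. \<nu> j *\<^sub>R y j"
  let ?gap = "\<lambda>j. \<nu> j * (f (y i) - f (y j))"
  have jensen: "f ?x \<le> (\<Sum>j\<in>I. \<nu> j * f (y j))"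
    using assms by (intro convex_on_sum) auto
  have "(\<Sum>j\<in>I. \<nu> j * f (y j)) = f (y i) - sum ?gap I"
    using assms(7) by (simp add: right_diff_distrib sum_subtractf sum_distrib_right[symmetric])
  moreover have gap_nonneg: "0 \<le> ?gap j" if "j \<in> I" for j
    using assms(5,6)[of j] that by (cases "j = i") auto
  ultimately have bound: "f ?x \<le> f (y i) - sum ?gap I" and "0 \<le> sum ?gap I"
    using jensen by (auto intro: sum_nonneg)
  then show "f ?x \<le> f (y i)" by linarith
  assume "f ?x = f (y i)"
  then have "sum ?gap I = 0" using bound \<open>0 \<le> sum ?gap I\<close> by linarith
  then have "\<nu> j = 0" if "j \<in> I - {i}" for j
    using sum_nonneg_eq_0_iff[OF assms(2) gap_nonneg] assms(5)[OF that] that by auto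
  moreover from this have "\<nu> i = 1"
    using assms(2,3,7) by (simp add: sum.remove)
  ultimately show "?x = y i"
    using assms(2,3) by (simp add: sum.remove)
qed

theorem proposition5:
  fixes alpha :: "nat \<Rightarrow> 'a::euclidean_space" and eta :: "nat \<Rightarrow> 'a"
    and K J :: nat
  assumes "\<forall>k\<in>{1..K}. alpha k \<noteq> 0"
    and "J \<ge> 1"
    and "\<forall>j\<in>{2..J}. norm (canon_proj alpha K (eta j)) < norm (canon_proj alpha K (eta 1))"
  defines "G \<equiv> {\<Sum>j\<in>{1..J}. \<nu> j *\<^sub>R eta j | \<nu>.
                   (\<forall>j\<in>{1..J}. 0 \<le> \<nu> j \<and> \<nu> j \<le> 1) \<and> (\<Sum>j\<in>{1..J}. \<nu> j) = 1}"
  shows "eta 1 \<in> G \<and>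
         (\<forall>x\<in>G. norm (canon_proj alpha K x) \<le> norm (canon_proj alpha K (eta 1))) \<and>
         (\<forall>x\<in>G. norm (canon_proj alpha K x) = norm (canon_proj alpha K (eta 1)) \<longrightarrow> x = eta 1)"
proof -
  let ?f = "\<lambda>x. norm (canon_proj alpha K x)"
  have one: "1 \<in> {1..J}" using assms(2) by simp
  have strict: "?f (eta j) < ?f (eta 1)" if "j \<in> {1..J} - {1}" for j
    using assms(3) that by auto
  have "eta 1 = (\<Sum>j\<in>{1..J}. (if j = 1 then 1 else 0) *\<^sub>R eta j)"
    using one by (subst sum.cong[OF refl, of _ _ "\<lambda>j. if j = 1 then eta j else 0"]) auto
  moreover have "(\<Sum>j\<in>{1..J}. if j = 1 then 1 else 0 :: real) = 1"
    using one by simp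
  ultimately have "eta 1 \<in> G"
    unfolding G_def by (intro CollectI exI[of _ "\<lambda>j. if j = 1 then 1 else 0"]) auto
  moreover have "?f x \<le> ?f (eta 1) \<and> (?f x = ?f (eta 1) \<longrightarrow> x = eta 1)" if "x \<in> G" for x
  proof -
    obtain \<nu> where x: "x = (\<Sum>j\<in>{1..J}. \<nu> j *\<^sub>R eta j)"
      and \<nu>: "\<forall>j\<in>{1..J}. 0 \<le> \<nu> j" "sum \<nu> {1..J} = 1"
      using \<open>x \<in> G\<close> unfolding G_def by blast
    show ?thesis
      unfolding x
      using convex_on_sum_le_unique_max[where y = eta, OF convex_on_norm_canon_proj _ one _ strict] \<nu>
      by auto
  qed
  ultimately show ?thesis by blast
qed

end
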